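(* Let $G$ be a transitive permutation group on a finite set $\Omega$ of size $n\ge2$. For $g\in G$ let $c(g)$ be the number of cycles (including fixed points) in the disjoint cycle decomposition of $g$, let $\ell(g)$ be the length of the shortest cycle of odd length in that decomposition ($\ell(g)=0$ if there is none), and for $i\ge0$ let $\mathcal{O}_i$ be the set of $g\in G$ whose cycle decomposition contains at most $i$ cycles of odd length. Let $r(G)$ be the number of orbits of $G$ on the set $\binom{\Omega}{\lfloor n/2\rfloor}$ of $\lfloor n/2\rfloor$-subsets of $\Omega$, and for $A\subseteq\Omega$ let $G_A$ be its setwise stabiliser. Suppose $\mathbf{m}(G)=\lceil(n+1)/2\rceil$. If $n$ is even, then \[ r(G)|G|=\sum_{A\in\binom{\Omega}{n/2}}|G_A|=\sum_{g\in\mathcal{O}_0}2^{c(g)}, \] and if $n$ is odd, then \[ r(G)|G|=\sum_{A\in\binom{\Omega}{\lfloor n/2\rfloor}}|G_A|\le\sum_{g\in\mathcal{O}_1}2^{c(g)-1}\ell(g)\le\left\lceil\frac n2\right\rceil\sum_{A\in\binom{\Omega}{\lfloor n/2\rfloor}}|G_A|=\left\lceil\frac n2\right\rceil r(G)|G|. \]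
   Context: A subset $A\subseteq\Omega$ is self-separable for $G$ if there exists $g\in G$ with $A\cap A^g=\emptyset$; $\mathbf{m}(G)$ is the minimum cardinality of a subset of $\Omega$ that is not self-separable for $G$. *)

theory Defs
  imports "HOL-Combinatorics.Permutations"
begin

definition perm_group :: "('a \<Rightarrow> 'a) set \<Rightarrow> 'a set \<Rightarrow> bool" where
  "perm_group G \<Omega> \<longleftrightarrow> (\<forall>g\<in>G. g permutes \<Omega>) \<and> id \<in> G \<and>
     (\<forall>g\<in>G. \<forall>h\<in>G. g \<circ> h \<in> G) \<and> (\<forall>g\<in>G. inv g \<in> G)"

definition transitive_on :: "('a \<Rightarrow> 'a) set \<Rightarrow> 'a set \<Rightarrow> bool" where
  "transitive_on G \<Omega> \<longleftrightarrow> (\<forall>x\<in>\<Omega>. \<forall>y\<in>\<Omega>. \<exists>g\<in>G. g x = y)"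

definition self_separable :: "('a \<Rightarrow> 'a) set \<Rightarrow> 'a set \<Rightarrow> bool" where
  "self_separable G A \<longleftrightarrow> (\<exists>g\<in>G. A \<inter> g ` A = {})"

definition msep :: "('a \<Rightarrow> 'a) set \<Rightarrow> 'a set \<Rightarrow> nat" where
  "msep G \<Omega> = (LEAST k. \<exists>A. A \<subseteq> \<Omega> \<and> card A = k \<and> \<not> self_separable G A)"

definition cycle_of :: "('a \<Rightarrow> 'a) \<Rightarrow> 'a \<Rightarrow> 'a set" where
  "cycle_of g x = {(g ^^ k) x | k. True}"

definition cycles_on :: "'a set \<Rightarrow> ('a \<Rightarrow> 'a) \<Rightarrow> 'a set set" where
  "cycles_on \<Omega> g = cycle_of g ` \<Omega>"

definition ncycles :: "'a set \<Rightarrow> ('a \<Rightarrow> 'a) \<Rightarrow> nat" where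
  "ncycles \<Omega> g = card (cycles_on \<Omega> g)"

definition odd_cycles :: "'a set \<Rightarrow> ('a \<Rightarrow> 'a) \<Rightarrow> 'a set set" where
  "odd_cycles \<Omega> g = {C \<in> cycles_on \<Omega> g. odd (card C)}"

definition shortest_odd :: "'a set \<Rightarrow> ('a \<Rightarrow> 'a) \<Rightarrow> nat" where
  "shortest_odd \<Omega> g = (if odd_cycles \<Omega> g = {} then 0 else Min (card ` odd_cycles \<Omega> g))"

definition O_set :: "('a \<Rightarrow> 'a) set \<Rightarrow> 'a set \<Rightarrow> nat \<Rightarrow> ('a \<Rightarrow> 'a) set" where
  "O_set G \<Omega> i = {g \<in> G. card (odd_cycles \<Omega> g) \<le> i}"

definition ksubsets :: "'a set \<Rightarrow> nat \<Rightarrow> 'a set set" where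
  "ksubsets \<Omega> k = {A. A \<subseteq> \<Omega> \<and> card A = k}"

definition setwise_stab :: "('a \<Rightarrow> 'a) set \<Rightarrow> 'a set \<Rightarrow> ('a \<Rightarrow> 'a) set" where
  "setwise_stab G A = {g \<in> G. g ` A = A}"

definition rG :: "('a \<Rightarrow> 'a) set \<Rightarrow> 'a set \<Rightarrow> nat" where
  "rG G \<Omega> = card ((\<lambda>A. (\<lambda>g. g ` A) ` G) ` ksubsets \<Omega> (card \<Omega> div 2))"

end

theory Submission
  imports Defs "HOL-Combinatorics.Orbits"
begin

text \<open>Let \<open>k = \<lfloor>n/2\<rfloor>\<close> and count the pairs \<open>(A, g)\<close> with \<open>A\<close> a \<open>k\<close>-subset and
  \<open>A \<inter> g A = {}\<close> in two ways.

  For fixed \<open>A\<close>, the elements \<open>g\<close> with a given image \<open>g A \<subseteq> \<Omega> - A\<close> form a coset of \<open>G\<^sub>A\<close>.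
  Since \<open>m(G) > k\<close>, at least one such image occurs, and at most \<open>binom (n - k) k\<close> do; this
  bound is \<open>1\<close> for even \<open>n\<close> and \<open>\<lceil>n/2\<rceil>\<close> for odd \<open>n\<close>.

  For fixed \<open>g\<close>, such an \<open>A\<close> meets each cycle \<open>C\<close> of \<open>g\<close> in at most \<open>\<lfloor>|C|/2\<rfloor>\<close> points.
  These bounds add up to \<open>(n - #odd cycles)/2\<close>, so \<open>g\<close> has exactly \<open>n mod 2\<close> odd cycles
  and \<open>A \<inter> C\<close> is one of the "alternating" halves of \<open>C\<close>: there are \<open>2\<close> of them if \<open>|C|\<close> is
  even and \<open>|C|\<close> if \<open>|C|\<close> is odd.

  Finally, by orbit-stabiliser \<open>\<Sum>\<^sub>A |G\<^sub>A| = r(G) |G|\<close>.\<close>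

section \<open>Cycles of a permutation\<close>

lemma self_in_cycle_of: "x \<in> cycle_of g x"
  unfolding cycle_of_def by (auto intro: exI[of _ 0])

lemma funpow_in_cycle_of: "(g ^^ i) x \<in> cycle_of g x"
  unfolding cycle_of_def by blast

context
  fixes g :: "'a \<Rightarrow> 'a"
  assumes perm: "permutation g"
begin

lemma cycle_of_eq_orbit: "cycle_of g x = orbit g x"
  unfolding cycle_of_def using orbit_altdef_permutation[OF perm] by simp

lemma cycle_of_conv_funpow:
  "cycle_of g x = (\<lambda>i. (g ^^ i) x) ` {..<card (cycle_of g x)}"
  and inj_on_funpow_cycle_of: "inj_on (\<lambda>i. (g ^^ i) x) {..<card (cycle_of g x)}"
  and funpow_card_cycle_of: "(g ^^ card (cycle_of g x)) x = x"
proof -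
  have x: "x \<in> orbit g x" by (rule permutation_self_in_orbit[OF perm])
  have inj: "inj_on (\<lambda>i. (g ^^ i) x) {..<funpow_dist1 g x x}"
    using inj_on_funpow_dist1[OF x] by (simp add: lessThan_atLeast0)
  have eq: "cycle_of g x = (\<lambda>i. (g ^^ i) x) ` {..<funpow_dist1 g x x}"
    using orbit_conv_funpow_dist1[OF x] by (simp add: cycle_of_eq_orbit lessThan_atLeast0)
  have "card (cycle_of g x) = funpow_dist1 g x x"
    by (simp add: eq card_image[OF inj])
  then show "cycle_of g x = (\<lambda>i. (g ^^ i) x) ` {..<card (cycle_of g x)}"
    and "inj_on (\<lambda>i. (g ^^ i) x) {..<card (cycle_of g x)}"
    and "(g ^^ card (cycle_of g x)) x = x"
    using eq inj funpow_dist1_prop[OF x] by simp_all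
qed

lemma finite_cycle_of: "finite (cycle_of g x)"
  using finite_orbit[OF permutation_self_in_orbit[OF perm]] by (simp add: cycle_of_eq_orbit)

lemma card_cycle_of_pos: "0 < card (cycle_of g x)"
  using finite_cycle_of[of x] self_in_cycle_of[of x g] by (auto simp: card_gt_0_iff)

lemma funpow_eq_funpow_cycle_of_iff:
  assumes "i < card (cycle_of g x)" "j < card (cycle_of g x)"
  shows "(g ^^ i) x = (g ^^ j) x \<longleftrightarrow> i = j"
  using inj_on_funpow_cycle_of[of x] assms by (auto dest: inj_onD)

lemma cycle_of_eqI: "y \<in> cycle_of g x \<Longrightarrow> cycle_of g y = cycle_of g x"
  using cyclic_on_orbit'[OF perm] orbit_cyclic_eq3 by (metis cycle_of_eq_orbit)

lemma inj_permutation: "inj g"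
  using perm permutation_bijective bij_is_inj by blast

lemma image_cycle_of: "g ` cycle_of g x = cycle_of g x"
proof -
  have "g ` orbit g x \<subseteq> orbit g x"
    using cyclic_on_inI[OF cyclic_on_orbit'[OF perm]] by blast
  with inj_permutation show ?thesis
    using finite_cycle_of by (metis card_image card_subset_eq cycle_of_eq_orbit inj_on_subset subset_UNIV)
qed

end

section \<open>Separated halves of a cycle\<close>

definition separated_halves :: "('a \<Rightarrow> 'a) \<Rightarrow> 'a set \<Rightarrow> 'a set set" where
  "separated_halves g S = {B. B \<subseteq> S \<and> card B = card S div 2 \<and> B \<inter> g ` B = {}}"

lemma card_Un_image_disjoint:
  assumes "inj g" "finite B" "B \<inter> g ` B = {}"
  shows "card (B \<union> g ` B) = 2 * card B"
  using assms by (simp add: card_Un_disjoint card_image inj_on_subset)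

lemma card_le_half_if_separated:
  assumes "inj g" "finite S" "g ` S \<subseteq> S" "B \<subseteq> S" "B \<inter> g ` B = {}"
  shows "card B \<le> card S div 2"
proof -
  have "2 * card B = card (B \<union> g ` B)"
    using assms finite_subset by (metis card_Un_image_disjoint)
  also have "\<dots> \<le> card S" using assms by (intro card_mono) auto
  finally show ?thesis by linarith
qed

lemma card_diff_separated_half:
  assumes "inj g" "finite S" "g ` S \<subseteq> S" "B \<in> separated_halves g S"
  shows "card (S - (B \<union> g ` B)) = card S mod 2"
proof -
  have B: "B \<subseteq> S" "card B = card S div 2" "B \<inter> g ` B = {}"
    using assms(4) unfolding separated_halves_def by auto
  have "B \<union> g ` B \<subseteq> S" using B(1) assms(3) by blast
  moreover have "card (B \<union> g ` B) = 2 * (card S div 2)"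
    using B assms(1,2) finite_subset by (metis card_Un_image_disjoint)
  ultimately have "card (S - (B \<union> g ` B)) = card S - 2 * (card S div 2)"
    using assms(2) by (metis card_Diff_subset finite_subset)
  then show ?thesis by presburger
qed

lemma card_odd_less: "card {i::nat. i < m \<and> odd i} = m div 2"
proof (induction m)
  case (Suc m)
  have "{i. i < Suc m \<and> odd i} = (if odd m then insert m else id) {i. i < m \<and> odd i}"
    by (auto simp: less_Suc_eq)
  then show ?case using Suc by auto
qed simp

definition alternating :: "('a \<Rightarrow> 'a) \<Rightarrow> 'a \<Rightarrow> 'a set" where
  "alternating g x = {(g ^^ i) x | i. i < card (cycle_of g x) \<and> odd i}"

context
  fixes g :: "'a \<Rightarrow> 'a"
  assumes perm: "permutation g"
begin

lemma alternating_in_separated_halves: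
  "alternating g x \<in> separated_halves g (cycle_of g x)"
proof -
  let ?m = "card (cycle_of g x)"
  have "alternating g x = (\<lambda>i. (g ^^ i) x) ` {i. i < ?m \<and> odd i}"
    unfolding alternating_def by blast
  moreover have "inj_on (\<lambda>i. (g ^^ i) x) {i. i < ?m \<and> odd i}"
    by (rule inj_on_subset[OF inj_on_funpow_cycle_of[OF perm]]) auto
  ultimately have card: "card (alternating g x) = ?m div 2"
    by (simp add: card_image card_odd_less)
  have "False" if "i < ?m" "odd i" "j < ?m" "odd j" "(g ^^ j) x = g ((g ^^ i) x)" for i j
  proof (cases "Suc i < ?m")
    case True
    then have "j = Suc i"
      using that funpow_eq_funpow_cycle_of_iff[OF perm] by (metis funpow.simps(2) o_apply)
    then show False using that by simp
  next
    case False
    then have "(g ^^ j) x = (g ^^ 0) x"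
      using that funpow_card_cycle_of[OF perm] by (metis Suc_lessI funpow.simps(2) funpow_0 o_apply)
    then have "j = 0"
      using that funpow_eq_funpow_cycle_of_iff[OF perm] card_cycle_of_pos[OF perm] by metis
    then show False using that by simp
  qed
  then have "alternating g x \<inter> g ` alternating g x = {}"
    unfolding alternating_def by blast
  moreover have "alternating g x \<subseteq> cycle_of g x"
    unfolding alternating_def by (auto simp: funpow_in_cycle_of)
  ultimately show ?thesis
    using card unfolding separated_halves_def by blast
qed

lemma not_in_alternating: "x \<notin> alternating g x"
proof
  assume "x \<in> alternating g x"
  then obtain i where i: "i < card (cycle_of g x)" "odd i" "(g ^^ i) x = (g ^^ 0) x"
    unfolding alternating_def by auto
  then have "i = 0"
    using funpow_eq_funpow_cycle_of_iff[OF perm] card_cycle_of_pos[OF perm] by metis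
  with i show False by simp
qed

lemma cycle_of_diff_alternating:
  "cycle_of g x - (alternating g x \<union> g ` alternating g x) \<subseteq> {x}"
proof
  fix y assume y: "y \<in> cycle_of g x - (alternating g x \<union> g ` alternating g x)"
  then obtain i where i: "i < card (cycle_of g x)" "y = (g ^^ i) x"
    using cycle_of_conv_funpow[OF perm] by blast
  show "y \<in> {x}"
  proof (cases i)
    case (Suc k)
    show ?thesis
    proof (cases "odd i")
      case True
      then have "y \<in> alternating g x" using i unfolding alternating_def by blast
      with y show ?thesis by blast
    next
      case False
      then have "(g ^^ k) x \<in> alternating g x"
        using i Suc unfolding alternating_def by auto
      moreover have "y = g ((g ^^ k) x)" using i Suc by simp
      ultimately show ?thesis using y by blast
    qed
  qed (use i in simp)
qed

lemma separated_half_eq_alternating: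
  assumes "B \<subseteq> cycle_of g x" "B \<inter> g ` B = {}" "x \<notin> B"
    and covers: "cycle_of g x - (B \<union> g ` B) \<subseteq> {x}"
  shows "B = alternating g x"
proof -
  let ?m = "card (cycle_of g x)"
  have in_B_iff: "(g ^^ i) x \<in> B \<longleftrightarrow> odd i" if "i < ?m" for i
    using that
  proof (induction i)
    case (Suc i)
    have step: "(g ^^ Suc i) x = g ((g ^^ i) x)" by simp
    have "(g ^^ Suc i) x \<in> B" if "(g ^^ i) x \<notin> B"
    proof -
      have "(g ^^ Suc i) x \<noteq> (g ^^ 0) x"
        using Suc.prems funpow_eq_funpow_cycle_of_iff[OF perm] card_cycle_of_pos[OF perm]
        by (metis nat.distinct(1))
      then have "(g ^^ Suc i) x \<in> B \<union> g ` B"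
        using covers funpow_in_cycle_of[of "Suc i" g x] by auto
      moreover have "(g ^^ Suc i) x \<notin> g ` B"
        using that step inj_permutation[OF perm] by (auto dest: injD)
      ultimately show ?thesis by blast
    qed
    moreover have "(g ^^ Suc i) x \<notin> B" if "(g ^^ i) x \<in> B"
      using that step assms(2) by blast
    ultimately show ?case using Suc by auto
  qed (use assms(3) in simp)
  show ?thesis
  proof
    show "B \<subseteq> alternating g x"
    proof
      fix b assume "b \<in> B"
      moreover obtain i where "i < ?m" "b = (g ^^ i) x"
        using \<open>b \<in> B\<close> assms(1) cycle_of_conv_funpow[OF perm] by blast
      ultimately show "b \<in> alternating g x"
        unfolding alternating_def using in_B_iff by auto
    qed
    show "alternating g x \<subseteq> B"
      unfolding alternating_def using in_B_iff by auto
  qed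
qed

lemma card_diff_separated_half_cycle_of:
  "B \<in> separated_halves g (cycle_of g x) \<Longrightarrow>
    card (cycle_of g x - (B \<union> g ` B)) = card (cycle_of g x) mod 2"
  using card_diff_separated_half inj_permutation[OF perm] finite_cycle_of[OF perm] image_cycle_of[OF perm]
  by (metis order_refl)

lemma cycle_of_diff_alternating_odd:
  assumes "odd (card (cycle_of g x))"
  shows "cycle_of g x - (alternating g x \<union> g ` alternating g x) = {x}"
proof -
  have "card (cycle_of g x - (alternating g x \<union> g ` alternating g x)) = 1"
    using card_diff_separated_half_cycle_of[OF alternating_in_separated_halves] assms
    by (simp add: odd_iff_mod_2_eq_one)
  then obtain z where "cycle_of g x - (alternating g x \<union> g ` alternating g x) = {z}"
    by (rule card_1_singletonE)
  with cycle_of_diff_alternating[of x] show ?thesis by blast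
qed

lemma separated_half_cycle_of_odd_cases:
  assumes "odd (card (cycle_of g x))" "B \<in> separated_halves g (cycle_of g x)"
  obtains y where "y \<in> cycle_of g x" "B = alternating g y"
proof -
  let ?C = "cycle_of g x"
  have "card (?C - (B \<union> g ` B)) = 1"
    using card_diff_separated_half_cycle_of[OF assms(2)] assms(1) by (simp add: odd_iff_mod_2_eq_one)
  then obtain y where y: "?C - (B \<union> g ` B) = {y}" by (rule card_1_singletonE)
  then have "y \<in> ?C" by blast
  then have "cycle_of g y = ?C" by (rule cycle_of_eqI[OF perm])
  with assms(2) y have "B = alternating g y"
    unfolding separated_halves_def by (intro separated_half_eq_alternating) auto
  with \<open>y \<in> ?C\<close> show ?thesis by (rule that)
qed

lemma card_separated_halves_cycle_of_odd:
  assumes "odd (card (cycle_of g x))"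
  shows "card (separated_halves g (cycle_of g x)) = card (cycle_of g x)"
proof -
  let ?C = "cycle_of g x"
  have cycle: "cycle_of g y = ?C" if "y \<in> ?C" for y
    using cycle_of_eqI[OF perm that] .
  have "bij_betw (alternating g) ?C (separated_halves g ?C)"
  proof (rule bij_betw_imageI)
    show "inj_on (alternating g) ?C"
    proof (rule inj_onI)
      fix y z assume yz: "y \<in> ?C" "z \<in> ?C" "alternating g y = alternating g z"
      have "{y} = ?C - (alternating g y \<union> g ` alternating g y)"
        using cycle_of_diff_alternating_odd[of y] cycle[OF yz(1)] assms by simp
      also have "\<dots> = {z}"
        using cycle_of_diff_alternating_odd[of z] cycle[OF yz(2)] assms yz(3) by simp
      finally show "y = z" by simp
    qed
    show "alternating g ` ?C = separated_halves g ?C"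
    proof
      show "alternating g ` ?C \<subseteq> separated_halves g ?C"
      proof (rule image_subsetI)
        fix y assume "y \<in> ?C"
        show "alternating g y \<in> separated_halves g ?C"
          using alternating_in_separated_halves[of y] cycle[OF \<open>y \<in> ?C\<close>] by simp
      qed
      show "separated_halves g ?C \<subseteq> alternating g ` ?C"
        using separated_half_cycle_of_odd_cases[OF assms] by blast
    qed
  qed
  then show ?thesis by (simp add: bij_betw_same_card)
qed

lemma separated_half_cycle_of_even_cases:
  assumes "even (card (cycle_of g x))" "B \<in> separated_halves g (cycle_of g x)"
  shows "B = alternating g x \<or> B = alternating g (g x)"
proof -
  let ?C = "cycle_of g x"
  have covers: "?C - (B \<union> g ` B) = {}"
    using card_diff_separated_half_cycle_of[OF assms(2)] assms(1) finite_cycle_of[OF perm] by simp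
  have "g x \<in> ?C" using funpow_in_cycle_of[of 1 g x] by simp
  then have gx: "cycle_of g (g x) = ?C" by (rule cycle_of_eqI[OF perm])
  show ?thesis
  proof (cases "x \<in> B")
    case False
    then show ?thesis
      using assms(2) covers unfolding separated_halves_def
      by (intro disjI1 separated_half_eq_alternating) auto
  next
    case True
    then have "g x \<notin> B" using assms(2) unfolding separated_halves_def by blast
    then show ?thesis
      using assms(2) covers gx unfolding separated_halves_def
      by (intro disjI2 separated_half_eq_alternating) auto
  qed
qed

lemma alternating_ne_alternating_step:
  assumes "1 < card (cycle_of g x)"
  shows "alternating g x \<noteq> alternating g (g x)"
proof -
  have "g x \<in> alternating g x"
    using assms unfolding alternating_def by (auto intro!: exI[of _ 1])
  moreover have "g x \<notin> alternating g (g x)" by (rule not_in_alternating)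
  ultimately show ?thesis by blast
qed

lemma card_separated_halves_cycle_of_even:
  assumes "even (card (cycle_of g x))"
  shows "card (separated_halves g (cycle_of g x)) = 2"
proof -
  have "g x \<in> cycle_of g x" using funpow_in_cycle_of[of 1 g x] by simp
  then have "alternating g (g x) \<in> separated_halves g (cycle_of g x)"
    using alternating_in_separated_halves[of "g x"] cycle_of_eqI[OF perm] by simp
  then have "separated_halves g (cycle_of g x) = {alternating g x, alternating g (g x)}"
    using alternating_in_separated_halves[of x] separated_half_cycle_of_even_cases[OF assms] by blast
  moreover have "card (cycle_of g x) \<noteq> 1" using assms by auto
  then have "1 < card (cycle_of g x)" using card_cycle_of_pos[OF perm, of x] by linarith
  ultimately show ?thesis using alternating_ne_alternating_step by simp
qed

lemma card_separated_halves_cycle_of: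
  "card (separated_halves g (cycle_of g x)) =
    (if even (card (cycle_of g x)) then 2 else card (cycle_of g x))"
  using card_separated_halves_cycle_of_odd card_separated_halves_cycle_of_even by simp

end

section \<open>Separated halves of a set carrying a permutation\<close>

lemma card_subsets_of_partition:
  assumes "finite P" "pairwise disjnt P" "\<And>C. C \<in> P \<Longrightarrow> F C \<subseteq> Pow C"
  shows "card {A. A \<subseteq> \<Union>P \<and> (\<forall>C\<in>P. A \<inter> C \<in> F C)} = (\<Prod>C\<in>P. card (F C))"
proof -
  let ?S = "{A. A \<subseteq> \<Union>P \<and> (\<forall>C\<in>P. A \<inter> C \<in> F C)}"
  have glue: "(\<Union>C'\<in>P. f C') \<inter> C = f C" if f: "f \<in> Pi\<^sub>E P F" and C: "C \<in> P" for f C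
  proof
    have sub: "f C' \<subseteq> C'" if "C' \<in> P" for C' using assms(3) that f by blast
    show "(\<Union>C'\<in>P. f C') \<inter> C \<subseteq> f C"
    proof
      fix y assume "y \<in> (\<Union>C'\<in>P. f C') \<inter> C"
      then obtain C' where C': "C' \<in> P" "y \<in> f C'" "y \<in> C" by blast
      then have "\<not> disjnt C' C" using sub unfolding disjnt_def by blast
      then have "C' = C" using assms(2) C'(1) C unfolding pairwise_def by blast
      with C' show "y \<in> f C" by simp
    qed
    show "f C \<subseteq> (\<Union>C'\<in>P. f C') \<inter> C" using sub C by blast
  qed
  have "bij_betw (\<lambda>A. restrict (\<lambda>C. A \<inter> C) P) ?S (Pi\<^sub>E P F)"
  proof (rule bij_betw_byWitness[where f' = "\<lambda>f. \<Union>C\<in>P. f C"])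
    show "\<forall>A\<in>?S. (\<Union>C\<in>P. restrict (\<lambda>C. A \<inter> C) P C) = A" by auto
    show "\<forall>f\<in>Pi\<^sub>E P F. restrict (\<lambda>C. (\<Union>C'\<in>P. f C') \<inter> C) P = f"
    proof
      fix f assume f: "f \<in> Pi\<^sub>E P F"
      then have "restrict (\<lambda>C. (\<Union>C'\<in>P. f C') \<inter> C) P = restrict f P"
        using glue by (intro restrict_ext) simp
      also have "\<dots> = f" using f by (simp add: PiE_def extensional_restrict)
      finally show "restrict (\<lambda>C. (\<Union>C'\<in>P. f C') \<inter> C) P = f" .
    qed
    show "(\<lambda>A. restrict (\<lambda>C. A \<inter> C) P) ` ?S \<subseteq> Pi\<^sub>E P F" by auto
    show "(\<lambda>f. \<Union>C\<in>P. f C) ` Pi\<^sub>E P F \<subseteq> ?S"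
      using glue assms(3) by (fastforce simp: PiE_def Pi_def)
  qed
  then have "card ?S = card (Pi\<^sub>E P F)" by (rule bij_betw_same_card)
  then show ?thesis using card_PiE[OF assms(1)] by simp
qed

context
  fixes g :: "'a \<Rightarrow> 'a" and \<Omega> :: "'a set"
  assumes perm: "g permutes \<Omega>" and fin: "finite \<Omega>"
begin

lemma permutation_if_permutes: "permutation g"
  using perm fin permutation_permutes by blast

lemma finite_cycles_on: "finite (cycles_on \<Omega> g)"
  unfolding cycles_on_def using fin by simp

lemma cycles_on_subset: "C \<in> cycles_on \<Omega> g \<Longrightarrow> C \<subseteq> \<Omega>"
  unfolding cycles_on_def
  using permutes_orbit_subset[OF perm] cycle_of_eq_orbit[OF permutation_if_permutes] by auto

lemma finite_cycle_on: "C \<in> cycles_on \<Omega> g \<Longrightarrow> finite C"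
  using cycles_on_subset fin finite_subset by blast

lemma Union_cycles_on: "\<Union>(cycles_on \<Omega> g) = \<Omega>"
proof
  show "\<Union>(cycles_on \<Omega> g) \<subseteq> \<Omega>" using cycles_on_subset by blast
  show "\<Omega> \<subseteq> \<Union>(cycles_on \<Omega> g)"
    unfolding cycles_on_def using self_in_cycle_of[of _ g] by blast
qed

lemma disjoint_cycles_on: "pairwise disjnt (cycles_on \<Omega> g)"
proof (rule pairwiseI)
  fix C C' assume "C \<in> cycles_on \<Omega> g" "C' \<in> cycles_on \<Omega> g" "C \<noteq> C'"
  then obtain x y where "C = cycle_of g x" "C' = cycle_of g y" "C \<noteq> C'"
    unfolding cycles_on_def by blast
  then show "disjnt C C'"
    using cycle_of_eqI[OF permutation_if_permutes] unfolding disjnt_def by (metis disjoint_iff)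
qed

lemma image_cycle_on: "C \<in> cycles_on \<Omega> g \<Longrightarrow> g ` C = C"
  unfolding cycles_on_def by (elim imageE) (simp add: image_cycle_of[OF permutation_if_permutes])

lemma card_eq_sum_card_Int_cycles_on:
  assumes "A \<subseteq> \<Omega>"
  shows "card A = (\<Sum>C\<in>cycles_on \<Omega> g. card (A \<inter> C))"
proof -
  have "A = \<Union>((\<lambda>C. A \<inter> C) ` cycles_on \<Omega> g)" using Union_cycles_on assms by blast
  also have "card \<dots> = (\<Sum>C\<in>cycles_on \<Omega> g. card (A \<inter> C))"
    using disjoint_cycles_on finite_cycles_on finite_cycle_on
    by (intro card_UN_disjoint) (auto simp: pairwise_def disjnt_def)
  finally show ?thesis .
qed

lemma card_odd_cycles_on:
  "2 * (\<Sum>C\<in>cycles_on \<Omega> g. card C div 2) + card (odd_cycles \<Omega> g) = card \<Omega>"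
proof -
  have "card (odd_cycles \<Omega> g) = (\<Sum>C\<in>cycles_on \<Omega> g. if odd (card C) then 1 else 0)"
    unfolding odd_cycles_def using finite_cycles_on by (simp add: sum.If_cases Int_def)
  also have "\<dots> = (\<Sum>C\<in>cycles_on \<Omega> g. card C mod 2)"
    by (rule sum.cong) (auto simp: odd_iff_mod_2_eq_one)
  finally have "card (odd_cycles \<Omega> g) = (\<Sum>C\<in>cycles_on \<Omega> g. card C mod 2)" .
  then have "2 * (\<Sum>C\<in>cycles_on \<Omega> g. card C div 2) + card (odd_cycles \<Omega> g)
      = (\<Sum>C\<in>cycles_on \<Omega> g. card C)"
    by (simp add: sum_distrib_left flip: sum.distrib)
  also have "\<dots> = card \<Omega>"
    using card_Union_disjoint[OF disjoint_cycles_on finite_cycle_on] Union_cycles_on by simp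
  finally show ?thesis .
qed

lemma separated_iff_cyclewise:
  assumes "A \<subseteq> \<Omega>"
  shows "A \<inter> g ` A = {} \<longleftrightarrow> (\<forall>C\<in>cycles_on \<Omega> g. (A \<inter> C) \<inter> g ` (A \<inter> C) = {})"
proof
  assume cyclewise: "\<forall>C\<in>cycles_on \<Omega> g. (A \<inter> C) \<inter> g ` (A \<inter> C) = {}"
  show "A \<inter> g ` A = {}"
  proof (rule ccontr)
    assume "A \<inter> g ` A \<noteq> {}"
    then obtain a where a: "a \<in> A" "g a \<in> A" by blast
    have "cycle_of g a \<in> cycles_on \<Omega> g" using a assms unfolding cycles_on_def by blast
    moreover have "a \<in> cycle_of g a" "g a \<in> cycle_of g a"
      using self_in_cycle_of funpow_in_cycle_of[of 1 g a] by simp_all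
    ultimately show False using cyclewise a by blast
  qed
next
  assume "A \<inter> g ` A = {}"
  then show "\<forall>C\<in>cycles_on \<Omega> g. (A \<inter> C) \<inter> g ` (A \<inter> C) = {}" by blast
qed

lemma card_Int_cycle_on_le:
  assumes "A \<inter> g ` A = {}" "C \<in> cycles_on \<Omega> g"
  shows "card (A \<inter> C) \<le> card C div 2"
proof (rule card_le_half_if_separated)
  show "inj g" by (rule permutes_inj[OF perm])
  show "finite C" by (rule finite_cycle_on[OF assms(2)])
  show "g ` C \<subseteq> C" using image_cycle_on[OF assms(2)] by simp
  show "A \<inter> C \<inter> g ` (A \<inter> C) = {}" using assms(1) by blast
qed simp

lemma separated_half_cyclewise:
  assumes "A \<in> separated_halves g \<Omega>"
  shows "card (odd_cycles \<Omega> g) = card \<Omega> mod 2"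
    and "C \<in> cycles_on \<Omega> g \<Longrightarrow> A \<inter> C \<in> separated_halves g C"
proof -
  let ?h = "\<Sum>C\<in>cycles_on \<Omega> g. card C div 2"
  have A: "A \<subseteq> \<Omega>" "card A = card \<Omega> div 2" "A \<inter> g ` A = {}"
    using assms unfolding separated_halves_def by auto
  have le: "card (A \<inter> C) \<le> card C div 2" if "C \<in> cycles_on \<Omega> g" for C
    using card_Int_cycle_on_le[OF A(3) that] .
  have "card A \<le> ?h"
    unfolding card_eq_sum_card_Int_cycles_on[OF A(1)] using le by (rule sum_mono)
  then show parity: "card (odd_cycles \<Omega> g) = card \<Omega> mod 2"
    using card_odd_cycles_on A(2) by presburger
  then have "?h = card \<Omega> div 2" using card_odd_cycles_on by presburger
  then have sum_eq: "(\<Sum>C\<in>cycles_on \<Omega> g. card (A \<inter> C)) = ?h"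
    using card_eq_sum_card_Int_cycles_on[OF A(1)] A(2) by simp
  assume C: "C \<in> cycles_on \<Omega> g"
  have "card (A \<inter> C) = card C div 2"
    using sum_mono_inv[where f = "\<lambda>C. card (A \<inter> C)" and g = "\<lambda>C. card C div 2",
        OF sum_eq le C finite_cycles_on]
    by simp
  moreover have "(A \<inter> C) \<inter> g ` (A \<inter> C) = {}"
    using separated_iff_cyclewise[OF A(1)] A(3) C by blast
  ultimately show "A \<inter> C \<in> separated_halves g C" unfolding separated_halves_def by blast
qed

lemma separated_half_if_cyclewise:
  assumes "card (odd_cycles \<Omega> g) = card \<Omega> mod 2" "A \<subseteq> \<Omega>"
    and cyclewise: "\<And>C. C \<in> cycles_on \<Omega> g \<Longrightarrow> A \<inter> C \<in> separated_halves g C"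
  shows "A \<in> separated_halves g \<Omega>"
proof -
  have "card A = (\<Sum>C\<in>cycles_on \<Omega> g. card C div 2)"
    using card_eq_sum_card_Int_cycles_on[OF assms(2)] cyclewise
    unfolding separated_halves_def by simp
  then have "card A = card \<Omega> div 2" using card_odd_cycles_on assms(1) by presburger
  moreover have "A \<inter> g ` A = {}"
    using separated_iff_cyclewise[OF assms(2)] cyclewise unfolding separated_halves_def by blast
  ultimately show ?thesis using assms(2) unfolding separated_halves_def by blast
qed

lemma separated_halves_eq_cyclewise:
  assumes "card (odd_cycles \<Omega> g) = card \<Omega> mod 2"
  shows "separated_halves g \<Omega> =
    {A. A \<subseteq> \<Union>(cycles_on \<Omega> g) \<and> (\<forall>C\<in>cycles_on \<Omega> g. A \<inter> C \<in> separated_halves g C)}"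
    (is "_ = ?cyclewise")
proof (intro set_eqI iffI)
  fix A assume A: "A \<in> separated_halves g \<Omega>"
  then have "A \<subseteq> \<Union>(cycles_on \<Omega> g)" using Union_cycles_on unfolding separated_halves_def by blast
  with separated_half_cyclewise(2)[OF A]
  show "A \<in> ?cyclewise" by blast
next
  fix A assume "A \<in> ?cyclewise"
  then have "A \<subseteq> \<Omega>" "\<And>C. C \<in> cycles_on \<Omega> g \<Longrightarrow> A \<inter> C \<in> separated_halves g C"
    using Union_cycles_on by auto
  then show "A \<in> separated_halves g \<Omega>" by (rule separated_half_if_cyclewise[OF assms])
qed

lemma card_separated_halves:
  "card (separated_halves g \<Omega>) =
    (if card (odd_cycles \<Omega> g) = card \<Omega> mod 2
     then \<Prod>C\<in>cycles_on \<Omega> g. if even (card C) then 2 else card C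
     else 0)"
proof (cases "card (odd_cycles \<Omega> g) = card \<Omega> mod 2")
  case True
  have "card (separated_halves g \<Omega>) = (\<Prod>C\<in>cycles_on \<Omega> g. card (separated_halves g C))"
    unfolding separated_halves_eq_cyclewise[OF True]
    using finite_cycles_on disjoint_cycles_on
    by (intro card_subsets_of_partition) (auto simp: separated_halves_def)
  also have "\<dots> = (\<Prod>C\<in>cycles_on \<Omega> g. if even (card C) then 2 else card C)"
    by (rule prod.cong)
      (auto simp: cycles_on_def card_separated_halves_cycle_of[OF permutation_if_permutes])
  finally show ?thesis using True by simp
next
  case False
  then have "separated_halves g \<Omega> = {}" using separated_half_cyclewise(1) by blast
  with False show ?thesis by simp
qed

lemma finite_odd_cycles: "finite (odd_cycles \<Omega> g)"
  unfolding odd_cycles_def using finite_cycles_on by simp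

lemma card_separated_halves_even:
  assumes "even (card \<Omega>)"
  shows "card (separated_halves g \<Omega>) =
    (if card (odd_cycles \<Omega> g) \<le> 0 then 2 ^ ncycles \<Omega> g else 0)"
proof -
  have "(\<Prod>C\<in>cycles_on \<Omega> g. if even (card C) then 2 else card C) = (\<Prod>C\<in>cycles_on \<Omega> g. 2)"
    if "odd_cycles \<Omega> g = {}"
    using that unfolding odd_cycles_def by (intro prod.cong) auto
  then show ?thesis
    using card_separated_halves assms finite_odd_cycles unfolding ncycles_def by auto
qed

lemma card_separated_halves_odd:
  assumes "odd (card \<Omega>)"
  shows "card (separated_halves g \<Omega>) =
    (if card (odd_cycles \<Omega> g) \<le> 1 then 2 ^ (ncycles \<Omega> g - 1) * shortest_odd \<Omega> g else 0)"
proof (cases "card (odd_cycles \<Omega> g) = 1")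
  case True
  then obtain C0 where C0: "odd_cycles \<Omega> g = {C0}" by (rule card_1_singletonE)
  then have C0_in: "C0 \<in> cycles_on \<Omega> g" "odd (card C0)" unfolding odd_cycles_def by auto
  have "(\<Prod>C\<in>cycles_on \<Omega> g. if even (card C) then 2 else card C)
      = card C0 * (\<Prod>C\<in>cycles_on \<Omega> g - {C0}. if even (card C) then 2 else card C)"
    using prod.remove[OF finite_cycles_on C0_in(1), where g = "\<lambda>C. if even (card C) then 2 else card C"]
      C0_in(2) by simp
  also have "(\<Prod>C\<in>cycles_on \<Omega> g - {C0}. if even (card C) then 2 else card C)
      = (\<Prod>C\<in>cycles_on \<Omega> g - {C0}. 2)"
    using C0 unfolding odd_cycles_def by (intro prod.cong) auto
  also have "\<dots> = 2 ^ (ncycles \<Omega> g - 1)"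
    unfolding ncycles_def using C0_in(1) finite_cycles_on by (simp add: card_Diff_singleton)
  finally show ?thesis
    using True assms card_separated_halves unfolding shortest_odd_def C0
    by (simp add: mult.commute odd_iff_mod_2_eq_one)
next
  case False
  moreover have "shortest_odd \<Omega> g = 0" if "card (odd_cycles \<Omega> g) = 0"
    using that finite_odd_cycles unfolding shortest_odd_def by simp
  ultimately show ?thesis using assms card_separated_halves by auto
qed

end

section \<open>Setwise action of a permutation group\<close>

definition set_orbit :: "('a \<Rightarrow> 'a) set \<Rightarrow> 'a set \<Rightarrow> 'a set set" where
  "set_orbit G A = (\<lambda>g. g ` A) ` G"

lemma self_separable_if_card_less_msep:
  assumes "A \<subseteq> \<Omega>" "card A < msep G \<Omega>"
  shows "self_separable G A"
  using not_less_Least[of "card A" "\<lambda>k. \<exists>A. A \<subseteq> \<Omega> \<and> card A = k \<and> \<not> self_separable G A"] assms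
  unfolding msep_def by blast

context
  fixes G :: "('a \<Rightarrow> 'a) set" and \<Omega> :: "'a set"
  assumes group: "perm_group G \<Omega>" and fin: "finite \<Omega>"
begin

lemma perm_group_permutes: "g \<in> G \<Longrightarrow> g permutes \<Omega>"
  using group unfolding perm_group_def by blast

lemma perm_group_comp: "g \<in> G \<Longrightarrow> h \<in> G \<Longrightarrow> g \<circ> h \<in> G"
  using group unfolding perm_group_def by blast

lemma perm_group_inv: "g \<in> G \<Longrightarrow> inv g \<in> G"
  using group unfolding perm_group_def by blast

lemma finite_perm_group: "finite G"
proof -
  have "G \<subseteq> {p. p permutes \<Omega>}" using perm_group_permutes by blast
  then show ?thesis using finite_permutations[OF fin] by (rule finite_subset)
qed

lemma self_in_set_orbit: "A \<in> set_orbit G A"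
proof -
  have "id \<in> G" using group unfolding perm_group_def by blast
  moreover have "A = (\<lambda>g. g ` A) id" by simp
  ultimately show ?thesis unfolding set_orbit_def by (rule rev_image_eqI[where f = "\<lambda>g. g ` A"])
qed

lemma card_transporter:
  assumes h: "h \<in> G"
  shows "card {g \<in> G. g ` A = h ` A} = card (setwise_stab G A)"
proof -
  have inv_h: "inv h \<circ> h = id" "h \<circ> inv h = id"
    using permutes_inv_o[OF perm_group_permutes[OF h]] by simp_all
  have "bij_betw ((\<circ>) h) (setwise_stab G A) {g \<in> G. g ` A = h ` A}"
  proof (rule bij_betw_byWitness[where f' = "(\<circ>) (inv h)"])
    show "\<forall>k\<in>setwise_stab G A. inv h \<circ> (h \<circ> k) = k"
      by (simp add: comp_assoc[symmetric] inv_h)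
    show "\<forall>g\<in>{g \<in> G. g ` A = h ` A}. h \<circ> (inv h \<circ> g) = g"
      by (simp add: comp_assoc[symmetric] inv_h)
    show "(\<circ>) h ` setwise_stab G A \<subseteq> {g \<in> G. g ` A = h ` A}"
    proof (rule image_subsetI)
      fix k assume "k \<in> setwise_stab G A"
      then have "k \<in> G" "k ` A = A" unfolding setwise_stab_def by auto
      moreover have "(h \<circ> k) ` A = h ` k ` A" by (rule image_comp[symmetric])
      ultimately show "h \<circ> k \<in> {g \<in> G. g ` A = h ` A}" using h perm_group_comp by simp
    qed
    show "(\<circ>) (inv h) ` {g \<in> G. g ` A = h ` A} \<subseteq> setwise_stab G A"
    proof (rule image_subsetI)
      fix g assume "g \<in> {g \<in> G. g ` A = h ` A}"
      then have "g \<in> G" "(inv h \<circ> g) ` A = (inv h \<circ> h) ` A"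
        by (simp_all only: mem_Collect_eq image_comp[symmetric])
      then show "inv h \<circ> g \<in> setwise_stab G A"
        using h perm_group_comp perm_group_inv inv_h(1) unfolding setwise_stab_def by simp
    qed
  qed
  then show ?thesis by (simp add: bij_betw_same_card)
qed

lemma card_transporter_le: "card {g \<in> G. g ` A = B} \<le> card (setwise_stab G A)"
proof (cases "B \<in> set_orbit G A")
  case True
  then obtain h where "h \<in> G" "B = h ` A" unfolding set_orbit_def by blast
  then show ?thesis using card_transporter by simp
next
  case False
  then have "{g \<in> G. g ` A = B} = {}" unfolding set_orbit_def by blast
  then show ?thesis unfolding \<open>{g \<in> G. g ` A = B} = {}\<close> by simp
qed

lemma orbit_stabiliser: "card (set_orbit G A) * card (setwise_stab G A) = card G"
proof -
  have "card G = (\<Sum>B\<in>set_orbit G A. card {g \<in> G. g ` A = B})"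
    unfolding set_orbit_def
    using sum.image_gen[OF finite_perm_group, where h = "\<lambda>_. 1::nat" and g = "\<lambda>g. g ` A"] by simp
  also have "\<dots> = (\<Sum>B\<in>set_orbit G A. card (setwise_stab G A))"
    by (rule sum.cong) (auto simp: set_orbit_def card_transporter)
  finally show ?thesis by simp
qed

lemma set_orbit_subset:
  assumes "B \<in> set_orbit G A"
  shows "set_orbit G B \<subseteq> set_orbit G A"
proof
  obtain h where h: "h \<in> G" "B = h ` A" using assms unfolding set_orbit_def by blast
  fix C assume "C \<in> set_orbit G B"
  then obtain g where g: "g \<in> G" "C = g ` B" unfolding set_orbit_def by blast
  have "g \<circ> h \<in> G" using g h perm_group_comp by blast
  moreover have "C = (g \<circ> h) ` A" using g h by (simp add: image_comp)
  ultimately show "C \<in> set_orbit G A" unfolding set_orbit_def by blast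
qed

lemma set_orbit_sym:
  assumes "B \<in> set_orbit G A"
  shows "A \<in> set_orbit G B"
proof -
  obtain h where h: "h \<in> G" "B = h ` A" using assms unfolding set_orbit_def by blast
  have "inv h ` B = (inv h \<circ> h) ` A" using h(2) by (simp add: image_comp)
  then have "A = inv h ` B" using permutes_inv_o(2)[OF perm_group_permutes[OF h(1)]] by simp
  then show ?thesis using perm_group_inv[OF h(1)] unfolding set_orbit_def by blast
qed

lemma set_orbit_eq: "B \<in> set_orbit G A \<Longrightarrow> set_orbit G B = set_orbit G A"
  using set_orbit_subset set_orbit_sym by blast

lemma finite_set_orbit: "finite (set_orbit G A)"
  unfolding set_orbit_def using finite_perm_group by simp

lemma card_setwise_stab_eq:
  assumes "B \<in> set_orbit G A"
  shows "card (setwise_stab G B) = card (setwise_stab G A)"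
proof -
  have "card (set_orbit G A) > 0"
    using finite_set_orbit self_in_set_orbit[of A] card_gt_0_iff by blast
  moreover have "card (set_orbit G A) * card (setwise_stab G B)
      = card (set_orbit G A) * card (setwise_stab G A)"
    using orbit_stabiliser[of B] orbit_stabiliser[of A] set_orbit_eq[OF assms] by simp
  ultimately show ?thesis by simp
qed

lemma sum_card_setwise_stab_set_orbit:
  "(\<Sum>B\<in>set_orbit G A. card (setwise_stab G B)) = card G"
  using card_setwise_stab_eq orbit_stabiliser[of A] by simp

lemma sum_card_setwise_stab:
  assumes "finite K" and invariant: "\<And>A g. A \<in> K \<Longrightarrow> g \<in> G \<Longrightarrow> g ` A \<in> K"
  shows "(\<Sum>A\<in>K. card (setwise_stab G A)) = card (set_orbit G ` K) * card G"
proof -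
  have fibre: "{A \<in> K. set_orbit G A = set_orbit G A0} = set_orbit G A0" if "A0 \<in> K" for A0
  proof
    show "{A \<in> K. set_orbit G A = set_orbit G A0} \<subseteq> set_orbit G A0"
      using self_in_set_orbit by blast
    show "set_orbit G A0 \<subseteq> {A \<in> K. set_orbit G A = set_orbit G A0}"
    proof
      fix A assume A: "A \<in> set_orbit G A0"
      then obtain h where "h \<in> G" "A = h ` A0" unfolding set_orbit_def by blast
      with invariant that have "A \<in> K" by blast
      with set_orbit_eq[OF A] show "A \<in> {A \<in> K. set_orbit G A = set_orbit G A0}" by blast
    qed
  qed
  have "(\<Sum>A\<in>K. card (setwise_stab G A))
      = (\<Sum>X\<in>set_orbit G ` K. \<Sum>A\<in>{A \<in> K. set_orbit G A = X}. card (setwise_stab G A))"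
    by (rule sum.image_gen[OF assms(1)])
  also have "\<dots> = (\<Sum>X\<in>set_orbit G ` K. card G)"
    using fibre sum_card_setwise_stab_set_orbit by (intro sum.cong) auto
  finally show ?thesis by simp
qed

lemma ksubsets_invariant:
  assumes "A \<in> ksubsets \<Omega> k" "g \<in> G"
  shows "g ` A \<in> ksubsets \<Omega> k"
proof -
  have g: "g permutes \<Omega>" by (rule perm_group_permutes[OF assms(2)])
  have "g ` A \<subseteq> g ` \<Omega>" using assms(1) unfolding ksubsets_def by (intro image_mono) simp
  moreover have "card (g ` A) = card A"
    using inj_on_subset[OF permutes_inj[OF g] subset_UNIV] by (rule card_image)
  ultimately show ?thesis using assms(1) unfolding ksubsets_def permutes_image[OF g] by simp
qed

lemma rG_mult_card:
  "rG G \<Omega> * card G = (\<Sum>A\<in>ksubsets \<Omega> (card \<Omega> div 2). card (setwise_stab G A))"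
proof -
  have "finite (ksubsets \<Omega> (card \<Omega> div 2))" unfolding ksubsets_def using fin by simp
  then show ?thesis
    using sum_card_setwise_stab ksubsets_invariant unfolding rG_def set_orbit_def by simp
qed

lemma card_setwise_stab_le_card_separating:
  assumes "self_separable G A"
  shows "card (setwise_stab G A) \<le> card {g \<in> G. A \<inter> g ` A = {}}"
proof -
  obtain h where h: "h \<in> G" "A \<inter> h ` A = {}" using assms unfolding self_separable_def by blast
  then have "{g \<in> G. g ` A = h ` A} \<subseteq> {g \<in> G. A \<inter> g ` A = {}}" by auto
  then have "card {g \<in> G. g ` A = h ` A} \<le> card {g \<in> G. A \<inter> g ` A = {}}"
    using finite_perm_group by (intro card_mono) auto
  then show ?thesis using card_transporter[OF h(1)] by simp
qed

lemma card_separating_le: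
  assumes "A \<subseteq> \<Omega>"
  shows "card {g \<in> G. A \<inter> g ` A = {}}
    \<le> (card \<Omega> - card A choose card A) * card (setwise_stab G A)"
proof -
  let ?Bs = "ksubsets (\<Omega> - A) (card A)"
  have fin_Bs: "finite ?Bs" unfolding ksubsets_def using fin by simp
  have "{g \<in> G. A \<inter> g ` A = {}} \<subseteq> (\<Union>B\<in>?Bs. {g \<in> G. g ` A = B})"
  proof
    fix g assume g: "g \<in> {g \<in> G. A \<inter> g ` A = {}}"
    have "g ` A \<in> ksubsets \<Omega> (card A)"
      using ksubsets_invariant[of A "card A" g] assms g unfolding ksubsets_def by simp
    with g have "g ` A \<in> ?Bs" unfolding ksubsets_def by blast
    with g show "g \<in> (\<Union>B\<in>?Bs. {g \<in> G. g ` A = B})" by blast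
  qed
  moreover have "finite (\<Union>B\<in>?Bs. {g \<in> G. g ` A = B})"
    by (rule finite_subset[OF _ finite_perm_group]) blast
  ultimately have "card {g \<in> G. A \<inter> g ` A = {}} \<le> card (\<Union>B\<in>?Bs. {g \<in> G. g ` A = B})"
    by (rule card_mono[rotated])
  also have "\<dots> \<le> (\<Sum>B\<in>?Bs. card {g \<in> G. g ` A = B})" by (rule card_UN_le[OF fin_Bs])
  also have "\<dots> \<le> (\<Sum>B\<in>?Bs. card (setwise_stab G A))" by (rule sum_mono[OF card_transporter_le])
  also have "\<dots> = card ?Bs * card (setwise_stab G A)" by simp
  also have "card ?Bs = card (\<Omega> - A) choose card A"
    unfolding ksubsets_def using fin by (simp add: n_subsets)
  also have "card (\<Omega> - A) = card \<Omega> - card A"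
    using fin assms by (simp add: card_Diff_subset finite_subset)
  finally show ?thesis .
qed

lemma sum_card_separating_eq:
  "(\<Sum>A\<in>ksubsets \<Omega> (card \<Omega> div 2). card {g \<in> G. A \<inter> g ` A = {}})
    = (\<Sum>g\<in>G. card (separated_halves g \<Omega>))"
proof (rule sum_multicount_gen)
  show "finite (ksubsets \<Omega> (card \<Omega> div 2))" unfolding ksubsets_def using fin by simp
  show "finite G" by (rule finite_perm_group)
  show "\<forall>g\<in>G. card {A \<in> ksubsets \<Omega> (card \<Omega> div 2). A \<inter> g ` A = {}} = card (separated_halves g \<Omega>)"
    unfolding ksubsets_def separated_halves_def by (auto intro: arg_cong[where f = card])
qed

lemma sum_card_separated_halves_le:
  "(\<Sum>g\<in>G. card (separated_halves g \<Omega>))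
    \<le> (card \<Omega> - card \<Omega> div 2 choose card \<Omega> div 2)
        * (\<Sum>A\<in>ksubsets \<Omega> (card \<Omega> div 2). card (setwise_stab G A))"
  unfolding sum_card_separating_eq[symmetric] sum_distrib_left
proof (rule sum_mono)
  fix A assume "A \<in> ksubsets \<Omega> (card \<Omega> div 2)"
  then have A: "A \<subseteq> \<Omega>" "card A = card \<Omega> div 2" unfolding ksubsets_def by auto
  from card_separating_le[OF A(1)]
  show "card {g \<in> G. A \<inter> g ` A = {}}
      \<le> (card \<Omega> - card \<Omega> div 2 choose card \<Omega> div 2) * card (setwise_stab G A)"
    unfolding A(2) .
qed

lemma sum_card_setwise_stab_le:
  assumes "card \<Omega> div 2 < msep G \<Omega>"
  shows "(\<Sum>A\<in>ksubsets \<Omega> (card \<Omega> div 2). card (setwise_stab G A))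
    \<le> (\<Sum>g\<in>G. card (separated_halves g \<Omega>))"
  unfolding sum_card_separating_eq[symmetric]
proof (rule sum_mono)
  fix A assume "A \<in> ksubsets \<Omega> (card \<Omega> div 2)"
  then have "self_separable G A"
    using assms by (intro self_separable_if_card_less_msep) (auto simp: ksubsets_def)
  then show "card (setwise_stab G A) \<le> card {g \<in> G. A \<inter> g ` A = {}}"
    by (rule card_setwise_stab_le_card_separating)
qed

lemma sum_card_separated_halves_even:
  assumes "even (card \<Omega>)"
  shows "(\<Sum>g\<in>G. card (separated_halves g \<Omega>)) = (\<Sum>g\<in>O_set G \<Omega> 0. 2 ^ ncycles \<Omega> g)"
proof -
  have "(\<Sum>g\<in>O_set G \<Omega> 0. 2 ^ ncycles \<Omega> g)
      = (\<Sum>g\<in>G. if card (odd_cycles \<Omega> g) \<le> 0 then 2 ^ ncycles \<Omega> g else 0)"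
    unfolding O_set_def by (rule sum.inter_filter[OF finite_perm_group])
  also have "\<dots> = (\<Sum>g\<in>G. card (separated_halves g \<Omega>))"
    by (rule sum.cong) (simp_all add: card_separated_halves_even[OF perm_group_permutes fin assms])
  finally show ?thesis ..
qed

lemma sum_card_separated_halves_odd:
  assumes "odd (card \<Omega>)"
  shows "(\<Sum>g\<in>G. card (separated_halves g \<Omega>))
    = (\<Sum>g\<in>O_set G \<Omega> 1. 2 ^ (ncycles \<Omega> g - 1) * shortest_odd \<Omega> g)"
proof -
  have "(\<Sum>g\<in>O_set G \<Omega> 1. 2 ^ (ncycles \<Omega> g - 1) * shortest_odd \<Omega> g)
      = (\<Sum>g\<in>G. if card (odd_cycles \<Omega> g) \<le> 1
                 then 2 ^ (ncycles \<Omega> g - 1) * shortest_odd \<Omega> g else 0)"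
    unfolding O_set_def by (rule sum.inter_filter[OF finite_perm_group])
  also have "\<dots> = (\<Sum>g\<in>G. card (separated_halves g \<Omega>))"
    by (rule sum.cong) (simp_all add: card_separated_halves_odd[OF perm_group_permutes fin assms])
  finally show ?thesis ..
qed

end

theorem lemma7p3:
  fixes G :: "('a \<Rightarrow> 'a) set" and \<Omega> :: "'a set"
  assumes "finite \<Omega>" and "card \<Omega> \<ge> 2"
    and "perm_group G \<Omega>" and "transitive_on G \<Omega>"
    and "msep G \<Omega> = (card \<Omega> + 2) div 2"
  shows "(even (card \<Omega>) \<longrightarrow>
            rG G \<Omega> * card G = (\<Sum>A\<in>ksubsets \<Omega> (card \<Omega> div 2). card (setwise_stab G A))
          \<and> (\<Sum>A\<in>ksubsets \<Omega> (card \<Omega> div 2). card (setwise_stab G A))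
              = (\<Sum>g\<in>O_set G \<Omega> 0. 2 ^ ncycles \<Omega> g))
       \<and> (odd (card \<Omega>) \<longrightarrow>
            rG G \<Omega> * card G = (\<Sum>A\<in>ksubsets \<Omega> (card \<Omega> div 2). card (setwise_stab G A))
          \<and> (\<Sum>A\<in>ksubsets \<Omega> (card \<Omega> div 2). card (setwise_stab G A))
              \<le> (\<Sum>g\<in>O_set G \<Omega> 1. 2 ^ (ncycles \<Omega> g - 1) * shortest_odd \<Omega> g)
          \<and> (\<Sum>g\<in>O_set G \<Omega> 1. 2 ^ (ncycles \<Omega> g - 1) * shortest_odd \<Omega> g)
              \<le> ((card \<Omega> + 1) div 2) * (\<Sum>A\<in>ksubsets \<Omega> (card \<Omega> div 2). card (setwise_stab G A))
          \<and> ((card \<Omega> + 1) div 2) * (\<Sum>A\<in>ksubsets \<Omega> (card \<Omega> div 2). card (setwise_stab G A))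
              = ((card \<Omega> + 1) div 2) * (rG G \<Omega> * card G))"
proof -
  note fin = assms(1) and group = assms(3)
  let ?k = "card \<Omega> div 2"
  let ?S = "\<Sum>A\<in>ksubsets \<Omega> ?k. card (setwise_stab G A)"
  let ?N = "\<Sum>g\<in>G. card (separated_halves g \<Omega>)"
  have orbits: "rG G \<Omega> * card G = ?S" by (rule rG_mult_card[OF group fin])
  have lower: "?S \<le> ?N" using assms(5) by (intro sum_card_setwise_stab_le[OF group fin]) simp
  have upper: "?N \<le> (card \<Omega> - ?k choose ?k) * ?S" by (rule sum_card_separated_halves_le[OF group fin])
  show ?thesis
  proof (intro conjI impI)
    assume "even (card \<Omega>)"
    then have "card \<Omega> - ?k = ?k" by presburger
    then show "?S = (\<Sum>g\<in>O_set G \<Omega> 0. 2 ^ ncycles \<Omega> g)"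
      using lower upper sum_card_separated_halves_even[OF group fin \<open>even (card \<Omega>)\<close>] by simp
  next
    assume odd: "odd (card \<Omega>)"
    then have "card \<Omega> - ?k = Suc ?k" by presburger
    then have "(card \<Omega> - ?k choose ?k) = Suc ?k" by (simp only: binomial_Suc_n)
    also have "Suc ?k = (card \<Omega> + 1) div 2" using odd by presburger
    finally have "(card \<Omega> - ?k choose ?k) = (card \<Omega> + 1) div 2" .
    then show "?S \<le> (\<Sum>g\<in>O_set G \<Omega> 1. 2 ^ (ncycles \<Omega> g - 1) * shortest_odd \<Omega> g)"
      and "(\<Sum>g\<in>O_set G \<Omega> 1. 2 ^ (ncycles \<Omega> g - 1) * shortest_odd \<Omega> g) \<le> (card \<Omega> + 1) div 2 * ?S"
      using lower upper sum_card_separated_halves_odd[OF group fin odd] by simp_all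
  qed (use orbits in simp_all)
qed

end
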